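(* Let $m$ be a real parameter and let $D:[0,\infty)\times\mathbb N\to\mathbb R$ be functions such that, with the operators $\mathcal K^\alpha$ acting on the variable $z$, $\mathcal K^+_lD(z,n)=(\tfrac m2+n)D(z,n+1)$ and $\mathcal K^0_lD(z,n)=(n+\tfrac m4)D(z,n)$ for all $n\in\mathbb N$, and $\mathcal K^-_lD(z,0)=0$. Then $\mathcal K^\alpha\rightarrow^DK^\alpha$ for each $\alpha\in\{+,-,0\}$.
   Context: $\mathbb N=\{0,1,2,\dots\}$. On smooth functions $f:[0,\infty)\to\mathbb R$: $\mathcal K^+f(z)=zf(z)$, $\mathcal K^-f(z)=zf''(z)+\frac m2f'(z)$, $\mathcal K^0f(z)=zf'(z)+\frac m4f(z)$. On functions $f:\mathbb N\to\mathbb R$: $K^+f(n)=(\frac m2+n)f(n+1)$, $K^-f(n)=nf(n-1)$, $K^0f(n)=(\frac m4+n)f(n)$. Left/right actions: $(\mathcal K_lD)(z,n)=(\mathcal KD(\cdot,n))(z)$, $(K_rD)(z,n)=(KD(z,\cdot))(n)$; $\mathcal K\rightarrow^DK$ means $\mathcal K_lD=K_rD$. *)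

theory Defs
  imports "HOL-Analysis.Analysis"
begin

definition hd :: "(real \<Rightarrow> real) \<Rightarrow> real \<Rightarrow> real" where
  "hd f z = vector_derivative f (at z within {0..})"

definition smooth_half :: "(real \<Rightarrow> real) \<Rightarrow> bool" where
  "smooth_half f \<longleftrightarrow> (\<forall>k. \<forall>z\<ge>0.
     ((hd ^^ k) f has_vector_derivative (hd ^^ Suc k) f z) (at z within {0..}))"

definition cKp :: "real \<Rightarrow> (real \<Rightarrow> real) \<Rightarrow> real \<Rightarrow> real" where
  "cKp m f z = z * f z"
definition cKm :: "real \<Rightarrow> (real \<Rightarrow> real) \<Rightarrow> real \<Rightarrow> real" where
  "cKm m f z = z * hd (hd f) z + m / 2 * hd f z"
definition cK0 :: "real \<Rightarrow> (real \<Rightarrow> real) \<Rightarrow> real \<Rightarrow> real" where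
  "cK0 m f z = z * hd f z + m / 4 * f z"

definition dKp :: "real \<Rightarrow> (nat \<Rightarrow> real) \<Rightarrow> nat \<Rightarrow> real" where
  "dKp m f n = (m / 2 + real n) * f (n + 1)"
definition dKm :: "real \<Rightarrow> (nat \<Rightarrow> real) \<Rightarrow> nat \<Rightarrow> real" where
  "dKm m f n = real n * f (n - 1)"
definition dK0 :: "real \<Rightarrow> (nat \<Rightarrow> real) \<Rightarrow> nat \<Rightarrow> real" where
  "dK0 m f n = (m / 4 + real n) * f n"

definition act_l :: "((real \<Rightarrow> real) \<Rightarrow> real \<Rightarrow> real) \<Rightarrow> (real \<Rightarrow> nat \<Rightarrow> real) \<Rightarrow> real \<Rightarrow> nat \<Rightarrow> real" where
  "act_l K D z n = K (\<lambda>w. D w n) z"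
definition act_r :: "((nat \<Rightarrow> real) \<Rightarrow> nat \<Rightarrow> real) \<Rightarrow> (real \<Rightarrow> nat \<Rightarrow> real) \<Rightarrow> real \<Rightarrow> nat \<Rightarrow> real" where
  "act_r K D z n = K (D z) n"

definition dual_rel :: "((real \<Rightarrow> real) \<Rightarrow> real \<Rightarrow> real) \<Rightarrow> (real \<Rightarrow> nat \<Rightarrow> real) \<Rightarrow> ((nat \<Rightarrow> real) \<Rightarrow> nat \<Rightarrow> real) \<Rightarrow> bool" where
  "dual_rel Kc D Kd \<longleftrightarrow> (\<forall>z\<ge>0. \<forall>n. act_l Kc D z n = act_r Kd D z n)"

end

theory Submission
  imports Defs
begin

text \<open>Write d_n = D(-, n). The hypothesis on K^0 is the Euler equation z d_n' = n d_n,
  whose derivative gives z d_n'' = (n - 1) d_n', so K^- d_n = (m/2 + n - 1) d_n'.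
  Differentiating the hypothesis z d_(n-1) = (m/2 + n - 1) d_n on K^+ and using the Euler
  equation for d_(n-1) turns this into n d_(n-1). For n = 0 the claim is the hypothesis
  on K^- itself.\<close>

lemma at_within_atLeast_nontrivial:
  fixes z :: real
  assumes "a \<le> z"
  shows "at z within {a..} \<noteq> bot"
proof -
  have "at_right z \<le> at z within {a..}"
    using assms by (intro at_le) auto
  then show ?thesis
    using trivial_limit_at_right_real by (auto simp: bot_unique)
qed

lemma has_real_derivative_unique_atLeast:
  fixes f g :: "real \<Rightarrow> real"
  assumes "a \<le> z"
    and "(f has_real_derivative f') (at z within {a..})"
    and "(g has_real_derivative g') (at z within {a..})"
    and "\<And>w. a \<le> w \<Longrightarrow> f w = g w"
  shows "f' = g'"
proof -
  have "(f has_vector_derivative g') (at z within {a..})"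
    using has_vector_derivative_transform[of z "{a..}" f g g'] assms(1,3,4)
    by (auto simp: has_real_derivative_iff_has_vector_derivative)
  then show ?thesis
    using assms(2) vector_derivative_unique_within[OF at_within_atLeast_nontrivial[OF assms(1)]]
    by (auto simp: has_real_derivative_iff_has_vector_derivative)
qed

lemma smooth_half_has_real_derivative_hd:
  assumes "smooth_half f" "0 \<le> z"
  shows "(f has_real_derivative hd f z) (at z within {0..})"
    and "(hd f has_real_derivative hd (hd f) z) (at z within {0..})"
  using assms unfolding smooth_half_def has_real_derivative_iff_has_vector_derivative
  by (metis funpow_0 funpow_Suc_right o_apply One_nat_def)+

lemma has_real_derivative_mult_ident:
  assumes "(f has_real_derivative f') (at z within S)"
  shows "((\<lambda>w. w * f w) has_real_derivative f z + z * f') (at z within S)"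
  using DERIV_mult[OF DERIV_ident assms] by (simp add: mult.commute)

lemma euler_equation_hd:
  assumes f: "smooth_half f" and euler: "\<And>w. 0 \<le> w \<Longrightarrow> w * hd f w = c * f w"
    and z: "0 \<le> z"
  shows "z * hd (hd f) z = (c - 1) * hd f z"
proof -
  have "hd f z + z * hd (hd f) z = c * hd f z"
  proof (rule has_real_derivative_unique_atLeast[OF z _ _ euler])
    show "((\<lambda>w. w * hd f w) has_real_derivative hd f z + z * hd (hd f) z) (at z within {0..})"
      by (rule has_real_derivative_mult_ident[OF smooth_half_has_real_derivative_hd(2)[OF f z]])
    show "((\<lambda>w. c * f w) has_real_derivative c * hd f z) (at z within {0..})"
      using DERIV_cmult[OF smooth_half_has_real_derivative_hd(1)[OF f z]] .
  qed
  then show ?thesis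
    by (simp add: algebra_simps)
qed

lemma hd_raising_equation:
  assumes f: "smooth_half f" and g: "smooth_half g"
    and raise: "\<And>w. 0 \<le> w \<Longrightarrow> w * f w = c * g w" and z: "0 \<le> z"
  shows "f z + z * hd f z = c * hd g z"
  using has_real_derivative_unique_atLeast[OF z
      has_real_derivative_mult_ident[OF smooth_half_has_real_derivative_hd(1)[OF f z]]
      DERIV_cmult[OF smooth_half_has_real_derivative_hd(1)[OF g z]] raise] .

lemma cKm_lowering:
  assumes f: "smooth_half f" and g: "smooth_half g"
    and euler_f: "\<And>w. 0 \<le> w \<Longrightarrow> w * hd f w = c * f w"
    and euler_g: "\<And>w. 0 \<le> w \<Longrightarrow> w * hd g w = (c + 1) * g w"
    and raise: "\<And>w. 0 \<le> w \<Longrightarrow> w * f w = (m / 2 + c) * g w"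
    and z: "0 \<le> z"
  shows "cKm m g z = (c + 1) * f z"
proof -
  have "cKm m g z = z * hd (hd g) z + m / 2 * hd g z"
    by (simp add: cKm_def)
  also have "\<dots> = (m / 2 + c) * hd g z"
    using euler_equation_hd[OF g euler_g z] by (simp add: algebra_simps)
  also have "\<dots> = f z + z * hd f z"
    using hd_raising_equation[OF f g raise z] by simp
  also have "\<dots> = (c + 1) * f z"
    using euler_f[OF z] by (simp add: algebra_simps)
  finally show ?thesis .
qed

theorem proposition5p1:
  fixes m :: real and D :: "real \<Rightarrow> nat \<Rightarrow> real"
  assumes smooth: "\<And>n. smooth_half (\<lambda>z. D z n)"
    and hp: "\<And>z n. z \<ge> 0 \<Longrightarrow> act_l (cKp m) D z n = (m / 2 + real n) * D z (n + 1)"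
    and h0: "\<And>z n. z \<ge> 0 \<Longrightarrow> act_l (cK0 m) D z n = (real n + m / 4) * D z n"
    and hm: "\<And>z. z \<ge> 0 \<Longrightarrow> act_l (cKm m) D z 0 = 0"
  shows "dual_rel (cKp m) D (dKp m) \<and> dual_rel (cKm m) D (dKm m) \<and> dual_rel (cK0 m) D (dK0 m)"
proof -
  have euler: "w * hd (\<lambda>z. D z n) w = real n * D w n" if "0 \<le> w" for n w
    using h0[OF that, of n] by (simp add: act_l_def cK0_def algebra_simps)
  have raise: "w * D w n = (m / 2 + real n) * D w (Suc n)" if "0 \<le> w" for n w
    using hp[OF that, of n] by (simp add: act_l_def cKp_def)
  have lowering: "act_l (cKm m) D z n = dKm m (D z) n" if "0 \<le> z" for z n
  proof (cases n)
    case 0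
    then show ?thesis using hm[OF that] by (simp add: dKm_def)
  next
    case (Suc k)
    have "cKm m (\<lambda>w. D w (Suc k)) z = (real k + 1) * D z k"
      by (rule cKm_lowering[OF smooth smooth euler _ raise that]) (use euler in auto)
    then show ?thesis
      using Suc by (simp add: act_l_def dKm_def)
  qed
  show ?thesis
    using hp h0 lowering by (auto simp: dual_rel_def act_r_def dKp_def dK0_def algebra_simps)
qed

end
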